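(* Suppose Assumptions A1, A2 and A3 hold, and let $\{w_k\}$ be generated by the subsampled Newton iteration $w_{k+1}=w_k-\nabla^2F_{S_k}(w_k)^{-1}\nabla F_{X_k}(w_k)$ (unit steplength). Then for each $k$, $$\mathbb{E}_k[\|w_{k+1}-w^*\|]\le\frac{1}{\mu_{|S_k|}}\left[\frac M2\|w_k-w^*\|^2+\mathbb{E}_k\big\|\big(\nabla^2F_{S_k}(w_k)-\nabla^2F(w_k)\big)(w_k-w^* )\big\|+\frac{v}{\sqrt{|X_k|}}\right],$$ where $\mathbb{E}_k$ denotes expectation over the random choice of $X_k$ and $S_k$ conditional on $w_k$.
   Context: Setting: $P$ is a probability distribution on input–output pairs $(x,y)$, $f(w;x,y)$ is a smooth loss, and $F(w)=\int f(w;x,y)\,dP(x,y)$ for $w\in\mathbb{R}^d$. Sample points $(x^i,y^i)$ are drawn independently from $P$, and $F_i(w)=f(w;x^i,y^i)$, so that $\mathbb{E}[\nabla F_i(w)]=\nabla F(w)$ and $\mathbb{E}[\nabla^2F_i(w)]=\nabla^2F(w)$. For a finite index set $S$, $\nabla F_S(w)=\frac1{|S|}\sum_{i\in S}\nabla F_i(w)$ and $\nabla^2F_S(w)=\frac1{|S|}\sum_{i\in S}\nabla^2F_i(w)$. The samples $X_k,S_k$ are index sets of independently drawn points, chosen independently of each other and of the past. $w^*$ is the unique minimizer of $F$. Assumption A1: $F$ is twice continuously differentiable; for every positive integer $\beta$ there are constants $0<\mu_\beta\le L_\beta$ such that for every $S$ with $|S|=\beta$, $\mu_\beta I\preceq\nabla^2F_S(w)\preceq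 L_\beta I$ for all $w$; $0<\bar\mu\le\mu_\beta$ and $L_\beta\le\bar L<\infty$ for all $\beta$; and $\mu I\preceq\nabla^2F(w)\preceq LI$ for all $w$. Assumption A2: $\operatorname{tr}(\operatorname{Cov}(\nabla F_i(w)))\le v^2$ for all $w$. Assumption A3: $\|\nabla^2F(w)-\nabla^2F(z)\|\le M\|w-z\|$ for all $w,z$. *)

theory Defs
  imports "HOL-Probability.Probability"
begin

definition psd :: "real^'n^'n \<Rightarrow> bool" where
  "psd A \<longleftrightarrow> (\<forall>u::real^'n. 0 \<le> u \<bullet> (A *v u))"

definition loewner_between :: "real \<Rightarrow> real^'n^'n \<Rightarrow> real \<Rightarrow> bool" where
  "loewner_between a A b \<longleftrightarrow> psd (A - a *\<^sub>R mat 1) \<and> psd (b *\<^sub>R mat 1 - A)"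

definition sub_grad :: "('z \<Rightarrow> real^'n \<Rightarrow> real^'n) \<Rightarrow> nat \<Rightarrow> (nat \<Rightarrow> 'z) \<Rightarrow> real^'n \<Rightarrow> real^'n" where
  "sub_grad g n xs w = (1 / real n) *\<^sub>R (\<Sum>i<n. g (xs i) w)"

definition sub_hess :: "('z \<Rightarrow> real^'n \<Rightarrow> real^'n^'n) \<Rightarrow> nat \<Rightarrow> (nat \<Rightarrow> 'z) \<Rightarrow> real^'n \<Rightarrow> real^'n^'n" where
  "sub_hess h n ss w = (1 / real n) *\<^sub>R (\<Sum>i<n. h (ss i) w)"

definition sn_step ::
  "('z \<Rightarrow> real^'n \<Rightarrow> real^'n) \<Rightarrow> ('z \<Rightarrow> real^'n \<Rightarrow> real^'n^'n) \<Rightarrow> nat \<Rightarrow> nat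
   \<Rightarrow> (nat \<Rightarrow> 'z) \<Rightarrow> (nat \<Rightarrow> 'z) \<Rightarrow> real^'n \<Rightarrow> real^'n" where
  "sn_step g h nX nS xs ss w = w - matrix_inv (sub_hess h nS ss w) *v sub_grad g nX xs w"

end

theory Submission
  imports Defs
begin

text \<open>Write \<open>d = w - w\<^sup>*\<close>. Since \<open>\<nabla>F(w\<^sup>*) = 0\<close>, the step with sampled Hessian \<open>H\<close>
  and sampled gradient \<open>g\<close> satisfies
  \<open>H (w\<^sup>+ - w\<^sup>*) = (H - \<nabla>\<^sup>2F(w)) d + (\<nabla>\<^sup>2F(w) d - \<nabla>F(w)) + (\<nabla>F(w) - g)\<close>.
  The middle term is a Taylor remainder of \<open>\<nabla>F\<close>, hence at most \<open>M/2 \<parallel>d\<parallel>\<^sup>2\<close> by the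
  Lipschitz continuity of the Hessian; the last term is the error of a mean of \<open>|X|\<close>
  i.i.d. gradients, whose second moment is \<open>tr Cov / |X| \<le> v\<^sup>2 / |X|\<close>; and \<open>H\<close> stretches
  every vector by at least \<open>\<mu>\<^bsub>|S|\<^esub>\<close>.\<close>

lemma loewner_between_lower_inner:
  fixes A :: "real^'n^'n"
  assumes "loewner_between a A b"
  shows "a * (u \<bullet> u) \<le> u \<bullet> (A *v u)"
proof -
  have "0 \<le> u \<bullet> ((A - a *\<^sub>R mat 1) *v u)"
    using assms by (simp add: loewner_between_def psd_def)
  also have "(A - a *\<^sub>R mat 1) *v u = A *v u - a *\<^sub>R u"
    by (simp add: matrix_vector_mult_diff_rdistrib flip: scaleR_matrix_vector_assoc)
  finally show ?thesis by (simp add: inner_diff_right)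
qed

lemma loewner_between_lower_norm:
  fixes A :: "real^'n^'n"
  assumes "loewner_between a A b"
  shows "a * norm u \<le> norm (A *v u)"
proof (cases "u = 0")
  case False
  have "a * (norm u * norm u) \<le> norm u * norm (A *v u)"
    using loewner_between_lower_inner[OF assms, of u] Cauchy_Schwarz_ineq2[of u "A *v u"]
    by (simp add: power2_norm_eq_inner[symmetric] power2_eq_square)
  then show ?thesis
    using False by (metis mult.assoc mult.commute mult_le_cancel_left_pos zero_less_norm_iff)
qed simp

lemma loewner_between_matrix_inv:
  fixes A :: "real^'n^'n"
  assumes "loewner_between a A b" "0 < a"
  shows "A *v (matrix_inv A *v x) = x"
proof -
  have "\<forall>u. A *v u = 0 \<longrightarrow> u = 0"
    using loewner_between_lower_norm[OF assms(1)] assms(2)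
    by (metis mult_le_0_iff norm_eq_zero norm_ge_zero norm_zero order_antisym linorder_not_le)
  then have "invertible A"
    using matrix_left_invertible_ker invertible_left_inverse by blast
  then have "A ** matrix_inv A = mat 1"
    unfolding invertible_def matrix_inv_def by (rule someI2_ex) auto
  then show ?thesis
    by (metis matrix_vector_mul_assoc matrix_vector_mul_lid)
qed

lemma newton_step_error_le:
  fixes H Hw :: "real^'n^'n" and w wstar g gw :: "real^'n"
  assumes H: "loewner_between m H b" and m: "0 < m"
  shows "norm (w - matrix_inv H *v g - wstar)
    \<le> (1 / m) * (norm (Hw *v (w - wstar) - gw) + norm ((H - Hw) *v (w - wstar)) + norm (gw - g))"
proof -
  define d where "d = w - wstar"
  define u where "u = w - matrix_inv H *v g - wstar"
  have "H *v u = H *v d - g"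
    using loewner_between_matrix_inv[OF H m, of g]
    by (simp add: u_def d_def matrix_vector_mult_diff_distrib)
  also have "\<dots> = (H - Hw) *v d + (Hw *v d - gw) + (gw - g)"
    by (simp add: matrix_vector_mult_diff_rdistrib)
  finally have Hu: "H *v u = (H - Hw) *v d + (Hw *v d - gw) + (gw - g)" .
  have "m * norm u \<le> norm (H *v u)"
    by (rule loewner_between_lower_norm[OF H])
  also have "\<dots> \<le> norm ((H - Hw) *v d) + norm (Hw *v d - gw) + norm (gw - g)"
    unfolding Hu using norm_triangle_ineq[of "(H - Hw) *v d + (Hw *v d - gw)" "gw - g"]
      norm_triangle_ineq[of "(H - Hw) *v d" "Hw *v d - gw"] by linarith
  finally show ?thesis
    using m by (simp add: u_def d_def field_simps)
qed

lemma gradient_eq_0_at_minimum: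
  fixes F :: "real^'n \<Rightarrow> real"
  assumes "(F has_derivative (\<lambda>h. g \<bullet> h)) (at x)" and "\<And>u. F x \<le> F u"
  shows "g = 0"
proof -
  have "(\<lambda>h. g \<bullet> h) = (\<lambda>h. 0)"
    by (rule has_derivative_local_min[OF assms(1)]) (simp add: assms(2))
  then have "g \<bullet> g = 0" by metis
  then show ?thesis by simp
qed

lemma norm_gradient_taylor_remainder_le:
  fixes gradF :: "real^'n \<Rightarrow> real^'n" and hessF :: "real^'n \<Rightarrow> real^'n^'n"
  assumes F_hess: "\<And>w. (gradF has_derivative (\<lambda>h. hessF w *v h)) (at w)"
    and hess_lipschitz: "\<And>u y. onorm (\<lambda>x. (hessF u - hessF y) *v x) \<le> M * norm (u - y)"
  shows "norm (gradF y - gradF x - hessF x *v (y - x)) \<le> M / 2 * (norm (y - x))\<^sup>2"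
proof -
  define d where "d = y - x"
  define f where "f t = gradF (x + t *\<^sub>R d) - t *\<^sub>R (hessF x *v d)" for t :: real
  define f' where "f' t = hessF (x + t *\<^sub>R d) *v d - hessF x *v d" for t :: real
  define \<phi> where "\<phi> t = M / 2 * t\<^sup>2 * (norm d)\<^sup>2" for t :: real
  have f_deriv: "(f has_vector_derivative f' t) (at t)" for t
  proof -
    have "((\<lambda>t. x + t *\<^sub>R d) has_derivative (\<lambda>h. h *\<^sub>R d)) (at t)"
      by (auto intro!: derivative_eq_intros)
    from has_derivative_compose[OF this F_hess]
    have "((\<lambda>t. gradF (x + t *\<^sub>R d)) has_vector_derivative (hessF (x + t *\<^sub>R d) *v d)) (at t)"
      by (simp add: o_def has_vector_derivative_def matrix_vector_mult_scaleR)
    then show ?thesis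
      unfolding f_def f'_def by (auto intro!: derivative_eq_intros)
  qed
  have \<phi>_deriv: "(\<phi> has_vector_derivative (M * t * (norm d)\<^sup>2)) (at t)" for t
    unfolding \<phi>_def has_real_derivative_iff_has_vector_derivative[symmetric]
    by (auto intro!: derivative_eq_intros simp: power2_eq_square)
  have f'_le: "norm (f' t) \<le> M * t * (norm d)\<^sup>2" if "0 < t" for t
  proof -
    have "f' t = (hessF (x + t *\<^sub>R d) - hessF x) *v d"
      by (simp add: f'_def matrix_vector_mult_diff_rdistrib)
    then have "norm (f' t) \<le> onorm (\<lambda>v. (hessF (x + t *\<^sub>R d) - hessF x) *v v) * norm d"
      using onorm[OF matrix_vector_mul_bounded_linear] by simp
    also have "\<dots> \<le> M * norm (t *\<^sub>R d) * norm d"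
      using hess_lipschitz[of "x + t *\<^sub>R d" x] by (simp add: mult_right_mono)
    also have "\<dots> = M * t * (norm d)\<^sup>2"
      using that by (simp add: power2_eq_square)
    finally show ?thesis .
  qed
  have "norm (f 1 - f 0) \<le> \<phi> 1 - \<phi> 0"
  proof (rule differentiable_bound_general[OF zero_less_one _ _ f_deriv \<phi>_deriv])
    show "continuous_on {0..1} f" "continuous_on {0..1} \<phi>"
      using f_deriv \<phi>_deriv
      by (meson continuous_at_imp_continuous_on has_vector_derivative_continuous)+
  qed (use f'_le in auto)
  then show ?thesis
    by (simp add: f_def \<phi>_def d_def algebra_simps)
qed

lemma integral_PiM_centered_cross_moment:
  fixes P :: "'z measure" and a :: "'z \<Rightarrow> real" and n i k :: nat
  assumes P: "prob_space P" and a: "integrable P a" and a_sq: "integrable P (\<lambda>z. (a z)\<^sup>2)"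
    and a_mean: "integral\<^sup>L P a = 0" and ik: "i < n" "k < n"
  shows "integrable (PiM {..<n} (\<lambda>_. P)) (\<lambda>x. a (x i) * a (x k))"
    and "integral\<^sup>L (PiM {..<n} (\<lambda>_. P)) (\<lambda>x. a (x i) * a (x k))
           = (if i = k then integral\<^sup>L P (\<lambda>z. (a z)\<^sup>2) else 0)"
proof -
  interpret P: prob_space P by fact
  interpret product_sigma_finite "\<lambda>_. P" ..
  define \<phi> where "\<phi> m = (\<lambda>z. (if m = i then a z else 1) * (if m = k then a z else 1))" for m
  have prod_\<phi>: "(\<Prod>m<n. \<phi> m (x m)) = a (x i) * a (x k)" for x
  proof -
    have delta: "(\<Prod>m<n. if m = j then a (x m) else 1) = a (x j)" if "j < n" for j
      using that by (subst prod.delta) auto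
    show ?thesis
      using ik by (simp add: \<phi>_def prod.distrib delta)
  qed
  have \<phi>: "integrable P (\<phi> m)" for m
    using a a_sq by (cases "m = i"; cases "m = k") (auto simp: \<phi>_def power2_eq_square)
  have integral_\<phi>: "integral\<^sup>L P (\<phi> m) = (if m = i \<and> m = k then integral\<^sup>L P (\<lambda>z. (a z)\<^sup>2)
      else if m = i \<or> m = k then 0 else 1)" for m
    using a_mean by (cases "m = i"; cases "m = k") (auto simp: \<phi>_def power2_eq_square P.prob_space)
  show "integrable (PiM {..<n} (\<lambda>_. P)) (\<lambda>x. a (x i) * a (x k))"
    using product_integrable_prod[of "{..<n}" \<phi>] \<phi> by (simp add: prod_\<phi>)
  have "integral\<^sup>L (PiM {..<n} (\<lambda>_. P)) (\<lambda>x. a (x i) * a (x k)) = (\<Prod>m<n. integral\<^sup>L P (\<phi> m))"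
    using product_integral_prod[of "{..<n}" \<phi>] \<phi> by (simp add: prod_\<phi>)
  also have "\<dots> = (if i = k then integral\<^sup>L P (\<lambda>z. (a z)\<^sup>2) else 0)"
    using ik by (cases "i = k") (auto simp: integral_\<phi> cong: if_cong)
  finally show "integral\<^sup>L (PiM {..<n} (\<lambda>_. P)) (\<lambda>x. a (x i) * a (x k))
      = (if i = k then integral\<^sup>L P (\<lambda>z. (a z)\<^sup>2) else 0)" .
qed

lemma integral_PiM_square_sum_centered:
  fixes P :: "'z measure" and a :: "'z \<Rightarrow> real" and n :: nat
  assumes P: "prob_space P" and a: "integrable P a" and a_sq: "integrable P (\<lambda>z. (a z)\<^sup>2)"
    and a_mean: "integral\<^sup>L P a = 0"
  shows "integrable (PiM {..<n} (\<lambda>_. P)) (\<lambda>x. (\<Sum>i<n. a (x i))\<^sup>2)"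
    and "integral\<^sup>L (PiM {..<n} (\<lambda>_. P)) (\<lambda>x. (\<Sum>i<n. a (x i))\<^sup>2) = real n * integral\<^sup>L P (\<lambda>z. (a z)\<^sup>2)"
proof -
  note cross = integral_PiM_centered_cross_moment[OF P a a_sq a_mean]
  have square: "(\<Sum>i<n. a (x i))\<^sup>2 = (\<Sum>i<n. \<Sum>k<n. a (x i) * a (x k))" for x
    by (simp add: power2_eq_square sum_product)
  show "integrable (PiM {..<n} (\<lambda>_. P)) (\<lambda>x. (\<Sum>i<n. a (x i))\<^sup>2)"
    unfolding square by (intro Bochner_Integration.integrable_sum cross(1)) auto
  have "integral\<^sup>L (PiM {..<n} (\<lambda>_. P)) (\<lambda>x. (\<Sum>i<n. a (x i))\<^sup>2)
      = (\<Sum>i<n. \<Sum>k<n. integral\<^sup>L (PiM {..<n} (\<lambda>_. P)) (\<lambda>x. a (x i) * a (x k)))"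
    unfolding square
    by (subst Bochner_Integration.integral_sum) (auto intro!: sum.cong
        Bochner_Integration.integral_sum Bochner_Integration.integrable_sum cross(1))
  also have "\<dots> = (\<Sum>i<n. \<Sum>k<n. if i = k then integral\<^sup>L P (\<lambda>z. (a z)\<^sup>2) else 0)"
    by (intro sum.cong refl) (simp add: cross(2))
  finally show "integral\<^sup>L (PiM {..<n} (\<lambda>_. P)) (\<lambda>x. (\<Sum>i<n. a (x i))\<^sup>2)
      = real n * integral\<^sup>L P (\<lambda>z. (a z)\<^sup>2)"
    by simp
qed

lemma integral_PiM_norm_sq_sample_mean_error:
  fixes P :: "'z measure" and Y :: "'z \<Rightarrow> real^'n" and n :: nat
  assumes P: "prob_space P" and Y: "integrable P Y"
    and Y_sq: "\<And>j. integrable P (\<lambda>z. (Y z $ j)\<^sup>2)" and n: "n \<ge> 1"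
  shows "integrable (PiM {..<n} (\<lambda>_. P))
           (\<lambda>x. (norm (integral\<^sup>L P Y - (1 / real n) *\<^sub>R (\<Sum>i<n. Y (x i))))\<^sup>2)"
    and "integral\<^sup>L (PiM {..<n} (\<lambda>_. P))
           (\<lambda>x. (norm (integral\<^sup>L P Y - (1 / real n) *\<^sub>R (\<Sum>i<n. Y (x i))))\<^sup>2)
         = (\<Sum>j\<in>UNIV. prob_space.variance P (\<lambda>z. Y z $ j)) / real n"
proof -
  interpret P: prob_space P by fact
  have Y_comp: "integrable P (\<lambda>z. Y z $ j)" for j
    by (rule integrable_bounded_linear[OF bounded_linear_vec_nth Y])
  define a where "a j = (\<lambda>z. Y z $ j - integral\<^sup>L P (\<lambda>z. Y z $ j))" for j
  have a: "integrable P (a j)" "integral\<^sup>L P (a j) = 0" for j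
    using Y_comp by (auto simp: a_def P.prob_space)
  have a_sq: "integrable P (\<lambda>z. (a j z)\<^sup>2)" for j
    using Y_sq Y_comp by (simp add: a_def power2_diff)
  note sum_sq = integral_PiM_square_sum_centered[OF P a(1) a_sq a(2)]
  have error_sq: "(norm (integral\<^sup>L P Y - (1 / real n) *\<^sub>R (\<Sum>i<n. Y (x i))))\<^sup>2
      = (\<Sum>j\<in>UNIV. (\<Sum>i<n. a j (x i))\<^sup>2 / (real n)\<^sup>2)" for x
  proof -
    have "(integral\<^sup>L P Y - (1 / real n) *\<^sub>R (\<Sum>i<n. Y (x i))) $ j = - (\<Sum>i<n. a j (x i)) / real n" for j
      using n by (simp add: a_def sum_subtractf sum_component
          integral_bounded_linear[OF bounded_linear_vec_nth Y, symmetric] field_simps)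
    then show ?thesis
      unfolding power2_norm_eq_inner inner_vec_def by (simp add: power2_eq_square)
  qed
  show "integrable (PiM {..<n} (\<lambda>_. P))
      (\<lambda>x. (norm (integral\<^sup>L P Y - (1 / real n) *\<^sub>R (\<Sum>i<n. Y (x i))))\<^sup>2)"
    unfolding error_sq by (intro Bochner_Integration.integrable_sum integrable_divide sum_sq(1))
  have "integral\<^sup>L (PiM {..<n} (\<lambda>_. P))
      (\<lambda>x. (norm (integral\<^sup>L P Y - (1 / real n) *\<^sub>R (\<Sum>i<n. Y (x i))))\<^sup>2)
      = (\<Sum>j\<in>UNIV. real n * integral\<^sup>L P (\<lambda>z. (a j z)\<^sup>2) / (real n)\<^sup>2)"
    unfolding error_sq by (simp add: Bochner_Integration.integral_sum integrable_divide sum_sq)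
  also have "\<dots> = (\<Sum>j\<in>UNIV. prob_space.variance P (\<lambda>z. Y z $ j)) / real n"
    using n by (simp add: a_def power2_eq_square sum_divide_distrib)
  finally show "integral\<^sup>L (PiM {..<n} (\<lambda>_. P))
      (\<lambda>x. (norm (integral\<^sup>L P Y - (1 / real n) *\<^sub>R (\<Sum>i<n. Y (x i))))\<^sup>2)
      = (\<Sum>j\<in>UNIV. prob_space.variance P (\<lambda>z. Y z $ j)) / real n" .
qed

text \<open>Pointwise \<open>f \<le> f\<^sup>2 / (2t) + t / 2\<close> for every \<open>t > s\<close>; then let \<open>t\<close> decrease to \<open>s\<close>.\<close>
lemma nn_integral_le_of_integral_square_le:
  fixes Q :: "'a measure" and f :: "'a \<Rightarrow> real"
  assumes Q: "prob_space Q" and f_sq: "integrable Q (\<lambda>x. (f x)\<^sup>2)"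
    and second_moment: "integral\<^sup>L Q (\<lambda>x. (f x)\<^sup>2) \<le> s\<^sup>2" and s: "0 \<le> s"
  shows "(\<integral>\<^sup>+ x. ennreal (f x) \<partial>Q) \<le> ennreal s"
proof (rule ennreal_le_epsilon)
  interpret Q: prob_space Q by fact
  fix e :: real assume e: "0 < e"
  define t where "t = s + e"
  have t: "0 < t" using s e by (simp add: t_def)
  have am_gm: "f x \<le> (f x)\<^sup>2 / (2 * t) + t / 2" for x
  proof -
    have "2 * t * f x \<le> (f x)\<^sup>2 + t\<^sup>2"
      using zero_le_power2[of "f x - t"] by (simp add: power2_eq_square algebra_simps)
    then show ?thesis using t by (simp add: field_simps power2_eq_square)
  qed
  have "(\<integral>\<^sup>+ x. ennreal (f x) \<partial>Q) \<le> (\<integral>\<^sup>+ x. ennreal ((f x)\<^sup>2 / (2 * t) + t / 2) \<partial>Q)"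
    by (intro nn_integral_mono ennreal_leI am_gm)
  also have "\<dots> = ennreal (integral\<^sup>L Q (\<lambda>x. (f x)\<^sup>2) / (2 * t) + t / 2)"
    using f_sq t by (subst nn_integral_eq_integral) (auto simp: Q.prob_space)
  also have "\<dots> \<le> ennreal (s + e)"
  proof (rule ennreal_leI)
    have "integral\<^sup>L Q (\<lambda>x. (f x)\<^sup>2) / (2 * t) \<le> s\<^sup>2 / (2 * t)"
      using second_moment t by (simp add: divide_right_mono)
    also have "\<dots> \<le> s / 2"
      using s t e by (simp add: field_simps power2_eq_square t_def mult_left_mono)
    finally show "integral\<^sup>L Q (\<lambda>x. (f x)\<^sup>2) / (2 * t) + t / 2 \<le> s + e"
      using e by (simp add: t_def field_simps)
  qed
  finally show "(\<integral>\<^sup>+ x. ennreal (f x) \<partial>Q) \<le> ennreal s + ennreal e"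
    using s e by (simp flip: ennreal_plus)
qed

lemma nn_integral_PiM_norm_sample_mean_error_le:
  fixes P :: "'z measure" and Y :: "'z \<Rightarrow> real^'n" and n :: nat
  assumes P: "prob_space P" and Y: "integrable P Y"
    and Y_sq: "\<And>j. integrable P (\<lambda>z. (Y z $ j)\<^sup>2)" and n: "n \<ge> 1"
    and variance: "(\<Sum>j\<in>UNIV. prob_space.variance P (\<lambda>z. Y z $ j)) \<le> v\<^sup>2" and v: "0 \<le> v"
  shows "(\<integral>\<^sup>+ x. ennreal (norm (integral\<^sup>L P Y - (1 / real n) *\<^sub>R (\<Sum>i<n. Y (x i))))
           \<partial>PiM {..<n} (\<lambda>_. P)) \<le> ennreal (v / sqrt (real n))"
proof (rule nn_integral_le_of_integral_square_le)
  note error = integral_PiM_norm_sq_sample_mean_error[OF P Y Y_sq n]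
  show "prob_space (PiM {..<n} (\<lambda>_. P))"
    using P by (rule prob_space_PiM)
  show "integrable (PiM {..<n} (\<lambda>_. P))
      (\<lambda>x. (norm (integral\<^sup>L P Y - (1 / real n) *\<^sub>R (\<Sum>i<n. Y (x i))))\<^sup>2)"
    by (fact error(1))
  show "integral\<^sup>L (PiM {..<n} (\<lambda>_. P))
      (\<lambda>x. (norm (integral\<^sup>L P Y - (1 / real n) *\<^sub>R (\<Sum>i<n. Y (x i))))\<^sup>2) \<le> (v / sqrt (real n))\<^sup>2"
    using variance n by (simp add: error(2) power_divide divide_right_mono)
  show "0 \<le> v / sqrt (real n)"
    using v by simp
qed

lemma borel_measurable_matrix_vector_mult [measurable (raw)]:
  fixes A :: "'a \<Rightarrow> real^'n^'m"
  assumes "A \<in> borel_measurable M"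
  shows "(\<lambda>x. A x *v v) \<in> borel_measurable M"
proof -
  have "continuous_on UNIV (\<lambda>B::real^'n^'m. B *v v)"
    unfolding matrix_vector_mult_def by (intro continuous_intros)
  then show ?thesis
    using borel_measurable_continuous_onI measurable_compose[OF assms] by blast
qed

lemma nn_integral_pair_le:
  fixes Mx :: "'a measure" and Ms :: "'b measure"
    and X B :: "'a \<times> 'b \<Rightarrow> real" and C :: "'a \<Rightarrow> real"
  assumes Mx: "prob_space Mx" and Ms: "prob_space Ms"
    and [measurable]: "B \<in> borel_measurable (Mx \<Otimes>\<^sub>M Ms)" "C \<in> borel_measurable Mx"
    and nonneg: "0 \<le> c" "0 \<le> K" "\<And>p. 0 \<le> B p" "\<And>x. 0 \<le> C x"
    and X: "\<And>p. p \<in> space (Mx \<Otimes>\<^sub>M Ms) \<Longrightarrow> X p \<le> c * (K + B p + C (fst p))"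
  shows "(\<integral>\<^sup>+ p. ennreal (X p) \<partial>(Mx \<Otimes>\<^sub>M Ms))
    \<le> ennreal c * (ennreal K + (\<integral>\<^sup>+ p. ennreal (B p) \<partial>(Mx \<Otimes>\<^sub>M Ms)) + (\<integral>\<^sup>+ x. ennreal (C x) \<partial>Mx))"
proof -
  interpret pair_prob_space Mx Ms
    using Mx Ms by (simp add: pair_prob_space_def pair_sigma_finite_def prob_space_imp_sigma_finite)
  have "(\<integral>\<^sup>+ p. ennreal (X p) \<partial>(Mx \<Otimes>\<^sub>M Ms))
      \<le> (\<integral>\<^sup>+ p. ennreal c * (ennreal K + ennreal (B p) + ennreal (C (fst p))) \<partial>(Mx \<Otimes>\<^sub>M Ms))"
  proof (rule nn_integral_mono)
    fix p assume "p \<in> space (Mx \<Otimes>\<^sub>M Ms)"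
    then have "ennreal (X p) \<le> ennreal (c * (K + B p + C (fst p)))"
      by (intro ennreal_leI X)
    also have "\<dots> = ennreal c * (ennreal K + ennreal (B p) + ennreal (C (fst p)))"
      using nonneg by (simp add: ennreal_mult flip: ennreal_plus)
    finally show "ennreal (X p) \<le> \<dots>" .
  qed
  also have "\<dots> = ennreal c * (ennreal K + (\<integral>\<^sup>+ p. ennreal (B p) \<partial>(Mx \<Otimes>\<^sub>M Ms))
      + (\<integral>\<^sup>+ p. ennreal (C (fst p)) \<partial>(Mx \<Otimes>\<^sub>M Ms)))"
    by (simp add: nn_integral_cmult nn_integral_add emeasure_space_1)
  also have "(\<integral>\<^sup>+ p. ennreal (C (fst p)) \<partial>(Mx \<Otimes>\<^sub>M Ms)) = (\<integral>\<^sup>+ x. ennreal (C x) \<partial>Mx)"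
  proof -
    have "(\<integral>\<^sup>+ x. ennreal (C x) \<partial>distr (Mx \<Otimes>\<^sub>M Ms) Mx fst) = (\<integral>\<^sup>+ p. ennreal (C (fst p)) \<partial>(Mx \<Otimes>\<^sub>M Ms))"
      by (rule nn_integral_distr) auto
    then show ?thesis
      by (simp add: prob_space.distr_pair_fst[OF Ms] prob_space_imp_sigma_finite[OF Mx])
  qed
  finally show ?thesis .
qed

theorem lemma2p2:
  fixes P :: "'z measure"
    and f :: "real^'n \<Rightarrow> 'z \<Rightarrow> real"
    and grad :: "'z \<Rightarrow> real^'n \<Rightarrow> real^'n"
    and hess :: "'z \<Rightarrow> real^'n \<Rightarrow> real^'n^'n"
    and F :: "real^'n \<Rightarrow> real"
    and gradF :: "real^'n \<Rightarrow> real^'n"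
    and hessF :: "real^'n \<Rightarrow> real^'n^'n"
    and mu_b L_b :: "nat \<Rightarrow> real"
    and mu_bar L_bar mu L v M :: real
    and wstar w :: "real^'n"
    and nX nS :: nat
  assumes P: "prob_space P"
    and f_meas: "\<And>w. integrable P (f w)"
    and f_grad: "\<And>z w. z \<in> space P \<Longrightarrow> ((\<lambda>u. f u z) has_derivative (\<lambda>h. grad z w \<bullet> h)) (at w)"
    and f_hess: "\<And>z w. z \<in> space P \<Longrightarrow> (grad z has_derivative (\<lambda>h. hess z w *v h)) (at w)"
    and f_hess_cont: "\<And>z. z \<in> space P \<Longrightarrow> continuous_on UNIV (hess z)"
    and F_def: "\<And>w. F w = (\<integral>z. f w z \<partial>P)"
    and F_grad: "\<And>w. (F has_derivative (\<lambda>h. gradF w \<bullet> h)) (at w)"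
    and F_hess: "\<And>w. (gradF has_derivative (\<lambda>h. hessF w *v h)) (at w)"
    and F_hess_cont: "continuous_on UNIV hessF"
    and grad_int: "\<And>w. integrable P (\<lambda>z. grad z w)"
    and grad_unbiased: "\<And>w. gradF w = (\<integral>z. grad z w \<partial>P)"
    and hess_int: "\<And>w. integrable P (\<lambda>z. hess z w)"
    and hess_unbiased: "\<And>w. hessF w = (\<integral>z. hess z w \<partial>P)"
    and wstar_min: "\<And>u. u \<noteq> wstar \<Longrightarrow> F wstar < F u"
    (* Assumption A1 *)
    and A1_sub: "\<And>\<beta> ss u. \<beta> \<ge> 1 \<Longrightarrow> (\<forall>i<\<beta>. ss i \<in> space P) \<Longrightarrow>
                   loewner_between (mu_b \<beta>) (sub_hess hess \<beta> ss u) (L_b \<beta>)"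
    and A1_pos: "\<And>\<beta>. \<beta> \<ge> 1 \<Longrightarrow> 0 < mu_b \<beta> \<and> mu_b \<beta> \<le> L_b \<beta>"
    and A1_bar: "\<And>\<beta>. \<beta> \<ge> 1 \<Longrightarrow> 0 < mu_bar \<and> mu_bar \<le> mu_b \<beta> \<and> L_b \<beta> \<le> L_bar"
    and A1_F: "\<And>u. loewner_between mu (hessF u) L"
    and A1_muL: "0 < mu" "mu \<le> L"
    (* Assumption A2 *)
    and A2_sq: "\<And>u j. integrable P (\<lambda>z. (grad z u $ j)\<^sup>2)"
    and A2: "\<And>u. (\<Sum>j\<in>UNIV. prob_space.variance P (\<lambda>z. grad z u $ j)) \<le> v\<^sup>2"
    and v_nonneg: "0 \<le> v"
    (* Assumption A3 *)
    and A3: "\<And>u y. onorm (\<lambda>x. (hessF u - hessF y) *v x) \<le> M * norm (u - y)"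
    and nX: "nX \<ge> 1" and nS: "nS \<ge> 1"
  shows
   "(\<integral>\<^sup>+ p. ennreal (norm (sn_step grad hess nX nS (fst p) (snd p) w - wstar))
        \<partial>(PiM {..<nX} (\<lambda>_. P) \<Otimes>\<^sub>M PiM {..<nS} (\<lambda>_. P)))
    \<le> ennreal (1 / mu_b nS) *
       (ennreal (M / 2 * (norm (w - wstar))\<^sup>2)
        + (\<integral>\<^sup>+ p. ennreal (norm ((sub_hess hess nS (snd p) w - hessF w) *v (w - wstar)))
             \<partial>(PiM {..<nX} (\<lambda>_. P) \<Otimes>\<^sub>M PiM {..<nS} (\<lambda>_. P)))
        + ennreal (v / sqrt (real nX)))"
proof -
  let ?Mx = "PiM {..<nX} (\<lambda>_. P)" and ?Ms = "PiM {..<nS} (\<lambda>_. P)"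
  define K where "K = M / 2 * (norm (w - wstar))\<^sup>2"
  define B where "B p = norm ((sub_hess hess nS (snd p) w - hessF w) *v (w - wstar))"
    for p :: "(nat \<Rightarrow> 'z) \<times> (nat \<Rightarrow> 'z)"
  define C where "C x = norm (gradF w - sub_grad grad nX x w)" for x
  have [measurable]: "(\<lambda>z. grad z w) \<in> borel_measurable P" "(\<lambda>z. hess z w) \<in> borel_measurable P"
    using grad_int hess_int by auto
  have mu_pos: "0 < mu_b nS"
    using A1_pos[OF nS] by simp
  have "gradF wstar = 0"
    by (rule gradient_eq_0_at_minimum[OF F_grad]) (metis wstar_min order.refl less_imp_le)
  then have taylor: "norm (hessF w *v (w - wstar) - gradF w) \<le> K"
    using norm_gradient_taylor_remainder_le[OF F_hess A3, of wstar w]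
    by (simp add: K_def norm_minus_commute matrix_vector_mult_diff_distrib algebra_simps)
  have step: "norm (sn_step grad hess nX nS (fst p) (snd p) w - wstar)
      \<le> (1 / mu_b nS) * (K + B p + C (fst p))" if "p \<in> space (?Mx \<Otimes>\<^sub>M ?Ms)" for p
  proof -
    have "loewner_between (mu_b nS) (sub_hess hess nS (snd p) w) (L_b nS)"
      using that by (intro A1_sub[OF nS]) (auto simp: space_pair_measure space_PiM PiE_iff)
    from newton_step_error_le[OF this mu_pos, where w = w and wstar = wstar
        and g = "sub_grad grad nX (fst p) w" and Hw = "hessF w" and gw = "gradF w"]
    show ?thesis
      using taylor mu_pos unfolding sn_step_def B_def C_def
      by (elim order_trans, intro mult_left_mono add_right_mono) auto
  qed
  have mean_error: "(\<integral>\<^sup>+ x. ennreal (C x) \<partial>?Mx) \<le> ennreal (v / sqrt (real nX))"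
    using nn_integral_PiM_norm_sample_mean_error_le[OF P grad_int A2_sq nX A2 v_nonneg]
    by (simp add: C_def sub_grad_def grad_unbiased)
  have "(\<integral>\<^sup>+ p. ennreal (norm (sn_step grad hess nX nS (fst p) (snd p) w - wstar)) \<partial>(?Mx \<Otimes>\<^sub>M ?Ms))
      \<le> ennreal (1 / mu_b nS) * (ennreal K + (\<integral>\<^sup>+ p. ennreal (B p) \<partial>(?Mx \<Otimes>\<^sub>M ?Ms))
        + (\<integral>\<^sup>+ x. ennreal (C x) \<partial>?Mx))"
  proof (rule nn_integral_pair_le)
    show "prob_space ?Mx" "prob_space ?Ms"
      by (simp_all add: prob_space_PiM P)
    show "B \<in> borel_measurable (?Mx \<Otimes>\<^sub>M ?Ms)" "C \<in> borel_measurable ?Mx"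
      unfolding B_def C_def sub_hess_def sub_grad_def by measurable
    show "0 \<le> 1 / mu_b nS" "0 \<le> K" "\<And>p. 0 \<le> B p" "\<And>x. 0 \<le> C x"
      using mu_pos order_trans[OF norm_ge_zero taylor] by (auto simp: B_def C_def)
  qed (rule step)
  also have "\<dots> \<le> ennreal (1 / mu_b nS) * (ennreal K + (\<integral>\<^sup>+ p. ennreal (B p) \<partial>(?Mx \<Otimes>\<^sub>M ?Ms))
      + ennreal (v / sqrt (real nX)))"
    by (intro mult_left_mono add_left_mono mean_error) simp_all
  finally show ?thesis
    unfolding K_def B_def .
qed

end
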